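(* Let $p_\theta(x,z)$ be a joint probability density on $\mathcal{X}\times\mathcal{Z}$ with marginals $p_\theta(x)$, $p_\theta(z)$ and conditionals $p_\theta(x\mid z)$, $p_\theta(z\mid x)$. Let $p_{\mathrm{data}}(x)$ be a probability density on $\mathcal{X}$ and $q_\phi(z\mid x)$ a conditional density on $\mathcal{Z}$ for each $x$; set $q_\phi(x,z)=p_{\mathrm{data}}(x)\,q_\phi(z\mid x)$, $q_\phi(z)=\int p_{\mathrm{data}}(x)q_\phi(z\mid x)\,\mathrm{d}x$ and $q_\phi(x\mid z)=q_\phi(x,z)/q_\phi(z)$. Consider the three conditions (L) Likelihood Consistency: $p_\theta(x\mid z)=q_\phi(x\mid z)$ for all $x,z$; (P) Prior Consistency: $p_\theta(z)=q_\phi(z)$ for all $z$; (Q) Posterior Consistency: $p_\theta(z\mid x)=q_\phi(z\mid x)$ for all $x,z$. Then: 1. If (L) and (P) hold, then (Q) holds and $p_\theta(x)=p_{\mathrm{data}}(x)$. 2. If (L) and (Q) hold, then (P) holds and $p_\theta(x)=p_{\mathrm{data}}(x)$. 3. If (Q) and (P) hold and the family $\{q_\phi(x\mid z)\}_z$ is complete, then $p_\theta(x)=p_{\mathrm{data}}(x)$ (almost everywhere) and (L) holds.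
   Context: All densities are assumed strictly positive so that conditionals and ratios are defined. The family $\{q_\phi(\cdot\mid z)\}_{z\in\mathcal{Z}}$ is called complete if for every measurable $g$ on $\mathcal{X}$ that is integrable under each $q_\phi(\cdot\mid z)$, $\mathbb{E}_{x\sim q_\phi(x\mid z)}[g(x)]=0$ for all $z$ implies $g=0$ almost everywhere. *)

theory Defs
  imports "HOL-Analysis.Analysis"
begin

text \<open>Densities are taken with respect to sigma-finite reference measures MX on X and MZ on Z.
  The joint density p_theta is a function p :: x => z => real.  The encoder q_phi(z|x)
  is qzx x z.\<close>

definition marg_x :: "'z measure \<Rightarrow> ('x \<Rightarrow> 'z \<Rightarrow> real) \<Rightarrow> 'x \<Rightarrow> real" where
  "marg_x MZ p x = (\<integral>z. p x z \<partial>MZ)"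

definition marg_z :: "'x measure \<Rightarrow> ('x \<Rightarrow> 'z \<Rightarrow> real) \<Rightarrow> 'z \<Rightarrow> real" where
  "marg_z MX p z = (\<integral>x. p x z \<partial>MX)"

definition cond_x_given_z :: "'x measure \<Rightarrow> ('x \<Rightarrow> 'z \<Rightarrow> real) \<Rightarrow> 'x \<Rightarrow> 'z \<Rightarrow> real" where
  "cond_x_given_z MX p x z = p x z / marg_z MX p z"

definition cond_z_given_x :: "'z measure \<Rightarrow> ('x \<Rightarrow> 'z \<Rightarrow> real) \<Rightarrow> 'x \<Rightarrow> 'z \<Rightarrow> real" where
  "cond_z_given_x MZ p x z = p x z / marg_x MZ p x"

definition q_joint :: "('x \<Rightarrow> real) \<Rightarrow> ('x \<Rightarrow> 'z \<Rightarrow> real) \<Rightarrow> 'x \<Rightarrow> 'z \<Rightarrow> real" where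
  "q_joint pdata qzx x z = pdata x * qzx x z"

definition q_prior :: "'x measure \<Rightarrow> ('x \<Rightarrow> real) \<Rightarrow> ('x \<Rightarrow> 'z \<Rightarrow> real) \<Rightarrow> 'z \<Rightarrow> real" where
  "q_prior MX pdata qzx z = (\<integral>x. pdata x * qzx x z \<partial>MX)"

definition q_post :: "'x measure \<Rightarrow> ('x \<Rightarrow> real) \<Rightarrow> ('x \<Rightarrow> 'z \<Rightarrow> real) \<Rightarrow> 'x \<Rightarrow> 'z \<Rightarrow> real" where
  "q_post MX pdata qzx x z = q_joint pdata qzx x z / q_prior MX pdata qzx z"

definition complete_family :: "'x measure \<Rightarrow> 'z measure \<Rightarrow> ('x \<Rightarrow> 'z \<Rightarrow> real) \<Rightarrow> bool" where
  "complete_family MX MZ k \<longleftrightarrow>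
     (\<forall>g \<in> borel_measurable MX.
        (\<forall>z \<in> space MZ. integrable MX (\<lambda>x. k x z * g x)) \<longrightarrow>
        (\<forall>z \<in> space MZ. (\<integral>x. k x z * g x \<partial>MX) = 0) \<longrightarrow>
        (AE x in MX. g x = 0))"

end

theory Submission
  imports Defs
begin

text \<open>Likelihood and prior consistency together say p(x,z) = q(x,z), and integrating out z
  gives p(x) = p_data(x).  Likelihood and posterior consistency give
  p(x) q(z) = p_data(x) p(z); integrating over x, where both marginals have mass one,
  yields p(z) = q(z).  Under posterior and prior consistency,
  g = (p(x) - p_data(x)) / p_data(x) satisfies
  E_{q(x|z)}[g] = (p(z) - q(z)) / q(z) = 0 for every z, so completeness forces g = 0 a.e.\<close>

definition likelihood_consistent ::
    "'x measure \<Rightarrow> 'z measure \<Rightarrow> ('x \<Rightarrow> 'z \<Rightarrow> real) \<Rightarrow> ('x \<Rightarrow> real) \<Rightarrow> ('x \<Rightarrow> 'z \<Rightarrow> real) \<Rightarrow> bool"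
  where "likelihood_consistent MX MZ p pdata qzx \<longleftrightarrow>
    (\<forall>x\<in>space MX. \<forall>z\<in>space MZ. cond_x_given_z MX p x z = q_post MX pdata qzx x z)"

definition prior_consistent ::
    "'x measure \<Rightarrow> 'z measure \<Rightarrow> ('x \<Rightarrow> 'z \<Rightarrow> real) \<Rightarrow> ('x \<Rightarrow> real) \<Rightarrow> ('x \<Rightarrow> 'z \<Rightarrow> real) \<Rightarrow> bool"
  where "prior_consistent MX MZ p pdata qzx \<longleftrightarrow>
    (\<forall>z\<in>space MZ. marg_z MX p z = q_prior MX pdata qzx z)"

definition posterior_consistent ::
    "'x measure \<Rightarrow> 'z measure \<Rightarrow> ('x \<Rightarrow> 'z \<Rightarrow> real) \<Rightarrow> ('x \<Rightarrow> 'z \<Rightarrow> real) \<Rightarrow> bool"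
  where "posterior_consistent MX MZ p qzx \<longleftrightarrow>
    (\<forall>x\<in>space MX. \<forall>z\<in>space MZ. cond_z_given_x MZ p x z = qzx x z)"

lemma integrable_of_integral_nonzero: "(\<integral>x. f x \<partial>M) \<noteq> 0 \<Longrightarrow> integrable M f"
  using not_integrable_integral_eq by auto

lemma space_nonempty_of_integral_nonzero: "(\<integral>x. f x \<partial>M) \<noteq> 0 \<Longrightarrow> space M \<noteq> {}"
  using Bochner_Integration.integral_empty[of M f] by auto

lemma borel_measurable_marg_x:
  assumes "sigma_finite_measure MZ" and "(\<lambda>(x, z). p x z) \<in> borel_measurable (MX \<Otimes>\<^sub>M MZ)"
  shows "marg_x MZ p \<in> borel_measurable MX"
proof -
  interpret Z: sigma_finite_measure MZ by (rule assms(1))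
  show ?thesis
    unfolding marg_x_def using assms(2) by (intro Z.borel_measurable_lebesgue_integral) simp
qed

lemma integral_marg_x:
  assumes "sigma_finite_measure MX" and "sigma_finite_measure MZ"
    and "integrable (MX \<Otimes>\<^sub>M MZ) (\<lambda>(x, z). p x z)"
  shows "(\<integral>x. marg_x MZ p x \<partial>MX) = (\<integral>w. (\<lambda>(x, z). p x z) w \<partial>(MX \<Otimes>\<^sub>M MZ))"
proof -
  interpret pair_sigma_finite MX MZ
    using assms(1,2) by (simp add: pair_sigma_finite_def)
  show ?thesis
    using integral_fst'[OF assms(3)] unfolding marg_x_def by simp
qed

lemma marg_x_of_factorization:
  assumes "\<And>z. z \<in> space MZ \<Longrightarrow> p x z = c * k z" and "(\<integral>z. k z \<partial>MZ) = 1"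
  shows "marg_x MZ p x = c"
proof -
  have "marg_x MZ p x = (\<integral>z. c * k z \<partial>MZ)"
    unfolding marg_x_def using assms(1) by (intro Bochner_Integration.integral_cong) auto
  also have "\<dots> = c" using assms(2) by simp
  finally show ?thesis .
qed

lemma posterior_consistent_iff_factorization:
  assumes "\<forall>x\<in>space MX. marg_x MZ p x \<noteq> 0"
  shows "posterior_consistent MX MZ p qzx \<longleftrightarrow>
    (\<forall>x\<in>space MX. \<forall>z\<in>space MZ. p x z = marg_x MZ p x * qzx x z)"
  using assms unfolding posterior_consistent_def cond_z_given_x_def
  by (auto simp: divide_eq_eq mult.commute)

lemma cond_x_given_z_eq_q_post_iff:
  assumes "marg_z MX p z \<noteq> 0" and "q_prior MX pdata qzx z \<noteq> 0"
  shows "cond_x_given_z MX p x z = q_post MX pdata qzx x z \<longleftrightarrow>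
    p x z * q_prior MX pdata qzx z = q_joint pdata qzx x z * marg_z MX p z"
  using assms unfolding cond_x_given_z_def q_post_def by (simp add: field_simps)

lemma likelihood_prior_consistent_imp_posterior:
  assumes L: "likelihood_consistent MX MZ p pdata qzx" and P: "prior_consistent MX MZ p pdata qzx"
    and pz_nz: "\<forall>z\<in>space MZ. marg_z MX p z \<noteq> 0"
    and pdata_nz: "\<forall>x\<in>space MX. pdata x \<noteq> 0"
    and q_one: "\<forall>x\<in>space MX. (\<integral>z. qzx x z \<partial>MZ) = 1"
  shows "posterior_consistent MX MZ p qzx \<and> (\<forall>x\<in>space MX. marg_x MZ p x = pdata x)"
proof -
  have joint: "p x z = pdata x * qzx x z" if "x \<in> space MX" "z \<in> space MZ" for x z
    using L P pz_nz that
    by (auto simp: likelihood_consistent_def prior_consistent_def cond_x_given_z_eq_q_post_iff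
        q_joint_def)
  have marg: "marg_x MZ p x = pdata x" if "x \<in> space MX" for x
    using joint that q_one by (intro marg_x_of_factorization) auto
  have "posterior_consistent MX MZ p qzx"
    using joint marg pdata_nz by (subst posterior_consistent_iff_factorization) auto
  with marg show ?thesis by blast
qed

lemma likelihood_posterior_consistent_imp_prior:
  assumes L: "likelihood_consistent MX MZ p pdata qzx" and Q: "posterior_consistent MX MZ p qzx"
    and pX_one: "(\<integral>x. marg_x MZ p x \<partial>MX) = 1"
    and pdata_one: "(\<integral>x. pdata x \<partial>MX) = 1"
    and px_nz: "\<forall>x\<in>space MX. marg_x MZ p x \<noteq> 0"
    and pz_nz: "\<forall>z\<in>space MZ. marg_z MX p z \<noteq> 0"
    and qz_nz: "\<forall>z\<in>space MZ. q_prior MX pdata qzx z \<noteq> 0"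
    and q_nz: "\<forall>x\<in>space MX. \<forall>z\<in>space MZ. qzx x z \<noteq> 0"
  shows "prior_consistent MX MZ p pdata qzx \<and> (\<forall>x\<in>space MX. marg_x MZ p x = pdata x)"
proof -
  let ?pX = "marg_x MZ p" and ?pZ = "marg_z MX p" and ?qZ = "q_prior MX pdata qzx"
  have cross: "?pX x * ?qZ z = pdata x * ?pZ z" if "x \<in> space MX" "z \<in> space MZ" for x z
  proof -
    have "qzx x z * (?pX x * ?qZ z) = qzx x z * (pdata x * ?pZ z)"
      using L Q px_nz pz_nz qz_nz that
      by (auto simp: likelihood_consistent_def cond_x_given_z_eq_q_post_iff q_joint_def
          posterior_consistent_iff_factorization ac_simps)
    then show ?thesis using q_nz that by simp
  qed
  have prior: "?pZ z = ?qZ z" if z: "z \<in> space MZ" for z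
  proof -
    have "?qZ z = (\<integral>x. ?pX x \<partial>MX) * ?qZ z"
      using pX_one by simp
    also have "\<dots> = (\<integral>x. ?pX x * ?qZ z \<partial>MX)" by simp
    also have "\<dots> = (\<integral>x. pdata x * ?pZ z \<partial>MX)"
      using cross z by (intro Bochner_Integration.integral_cong) auto
    also have "\<dots> = ?pZ z" using pdata_one by simp
    finally show ?thesis by simp
  qed
  have "?pX x = pdata x" if x: "x \<in> space MX" for x
  proof -
    have "space MZ \<noteq> {}"
      using px_nz x unfolding marg_x_def by (blast dest: space_nonempty_of_integral_nonzero)
    then obtain z where z: "z \<in> space MZ" by blast
    show ?thesis using cross[OF x z] prior[OF z] qz_nz z by simp
  qed
  with prior show ?thesis unfolding prior_consistent_def by blast
qed

lemma posterior_prior_consistent_complete_imp_marg_x_AE: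
  assumes Q: "posterior_consistent MX MZ p qzx" and P: "prior_consistent MX MZ p pdata qzx"
    and complete: "complete_family MX MZ (q_post MX pdata qzx)"
    and pX_meas: "marg_x MZ p \<in> borel_measurable MX"
    and pdata_meas: "pdata \<in> borel_measurable MX"
    and px_nz: "\<forall>x\<in>space MX. marg_x MZ p x \<noteq> 0"
    and pdata_nz: "\<forall>x\<in>space MX. pdata x \<noteq> 0"
    and qz_nz: "\<forall>z\<in>space MZ. q_prior MX pdata qzx z \<noteq> 0"
  shows "AE x in MX. marg_x MZ p x = pdata x"
proof -
  let ?qZ = "q_prior MX pdata qzx" and ?k = "q_post MX pdata qzx"
  define g where "g x = (marg_x MZ p x - pdata x) / pdata x" for x
  have kg: "?k x z * g x = (p x z - q_joint pdata qzx x z) / ?qZ z"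
    if "x \<in> space MX" "z \<in> space MZ" for x z
  proof -
    have "p x z = marg_x MZ p x * qzx x z"
      using Q px_nz that by (simp add: posterior_consistent_iff_factorization)
    moreover have "pdata x \<noteq> 0" "?qZ z \<noteq> 0" using pdata_nz qz_nz that by auto
    ultimately show ?thesis by (simp add: q_post_def q_joint_def g_def field_simps)
  qed
  have "integrable MX (\<lambda>x. ?k x z * g x) \<and> (\<integral>x. ?k x z * g x \<partial>MX) = 0"
    if z: "z \<in> space MZ" for z
  proof -
    have p_int: "integrable MX (\<lambda>x. p x z)"
      using P qz_nz z unfolding prior_consistent_def marg_z_def
      by (auto intro: integrable_of_integral_nonzero)
    have q_int: "integrable MX (\<lambda>x. q_joint pdata qzx x z)"
      using qz_nz z unfolding q_prior_def q_joint_def by (auto intro: integrable_of_integral_nonzero)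
    have int: "integrable MX (\<lambda>x. (p x z - q_joint pdata qzx x z) / ?qZ z)"
      using p_int q_int by simp
    have "(\<integral>x. (p x z - q_joint pdata qzx x z) / ?qZ z \<partial>MX) = (marg_z MX p z - ?qZ z) / ?qZ z"
      using p_int q_int unfolding marg_z_def q_prior_def q_joint_def by simp
    also have "\<dots> = 0" using P z unfolding prior_consistent_def by simp
    finally show ?thesis
      using int kg z
      by (simp add: Bochner_Integration.integrable_cong[OF refl kg]
          Bochner_Integration.integral_cong[OF refl kg])
  qed
  moreover have "g \<in> borel_measurable MX" unfolding g_def using pX_meas pdata_meas by measurable
  ultimately have "AE x in MX. g x = 0" using complete unfolding complete_family_def by blast
  with AE_space show ?thesis by eventually_elim (use pdata_nz in \<open>auto simp: g_def\<close>)
qed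

lemma posterior_prior_consistent_imp_likelihood_AE:
  assumes Q: "posterior_consistent MX MZ p qzx" and P: "prior_consistent MX MZ p pdata qzx"
    and marg: "AE x in MX. marg_x MZ p x = pdata x"
    and px_nz: "\<forall>x\<in>space MX. marg_x MZ p x \<noteq> 0"
  shows "AE x in MX. \<forall>z\<in>space MZ. cond_x_given_z MX p x z = q_post MX pdata qzx x z"
  using marg AE_space
proof eventually_elim
  case (elim x)
  then show ?case
    using Q P px_nz
    by (auto simp: posterior_consistent_iff_factorization prior_consistent_def cond_x_given_z_def
        q_post_def q_joint_def)
qed

theorem corollary1:
  fixes MX :: "'x measure" and MZ :: "'z measure"
    and p :: "'x \<Rightarrow> 'z \<Rightarrow> real"
    and pdata :: "'x \<Rightarrow> real"
    and qzx :: "'x \<Rightarrow> 'z \<Rightarrow> real"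
  assumes sfX: "sigma_finite_measure MX" and sfZ: "sigma_finite_measure MZ"
    and p_meas: "(\<lambda>(x, z). p x z) \<in> borel_measurable (MX \<Otimes>\<^sub>M MZ)"
    and p_pos: "\<forall>x\<in>space MX. \<forall>z\<in>space MZ. 0 < p x z"
    and p_int: "integrable (MX \<Otimes>\<^sub>M MZ) (\<lambda>(x, z). p x z)"
    and p_one: "(\<integral>w. (\<lambda>(x, z). p x z) w \<partial>(MX \<Otimes>\<^sub>M MZ)) = 1"
    and pdata_meas: "pdata \<in> borel_measurable MX"
    and pdata_pos: "\<forall>x\<in>space MX. 0 < pdata x"
    and pdata_int: "integrable MX pdata"
    and pdata_one: "(\<integral>x. pdata x \<partial>MX) = 1"
    and q_meas: "(\<lambda>(x, z). qzx x z) \<in> borel_measurable (MX \<Otimes>\<^sub>M MZ)"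
    and q_pos: "\<forall>x\<in>space MX. \<forall>z\<in>space MZ. 0 < qzx x z"
    and q_int: "\<forall>x\<in>space MX. integrable MZ (qzx x)"
    and q_one: "\<forall>x\<in>space MX. (\<integral>z. qzx x z \<partial>MZ) = 1"
    and px_pos: "\<forall>x\<in>space MX. 0 < marg_x MZ p x"
    and pz_pos: "\<forall>z\<in>space MZ. 0 < marg_z MX p z"
    and qz_pos: "\<forall>z\<in>space MZ. 0 < q_prior MX pdata qzx z"
  defines "L \<equiv> (\<forall>x\<in>space MX. \<forall>z\<in>space MZ.
                  cond_x_given_z MX p x z = q_post MX pdata qzx x z)"
      and "P \<equiv> (\<forall>z\<in>space MZ. marg_z MX p z = q_prior MX pdata qzx z)"
      and "Q \<equiv> (\<forall>x\<in>space MX. \<forall>z\<in>space MZ. cond_z_given_x MZ p x z = qzx x z)"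
  shows "(L \<and> P \<longrightarrow> Q \<and> (\<forall>x\<in>space MX. marg_x MZ p x = pdata x))
       \<and> (L \<and> Q \<longrightarrow> P \<and> (\<forall>x\<in>space MX. marg_x MZ p x = pdata x))
       \<and> (Q \<and> P \<and> complete_family MX MZ (q_post MX pdata qzx) \<longrightarrow>
            (AE x in MX. marg_x MZ p x = pdata x)
          \<and> (AE x in MX. \<forall>z\<in>space MZ.
                cond_x_given_z MX p x z = q_post MX pdata qzx x z))"
proof -
  have L_eq: "L = likelihood_consistent MX MZ p pdata qzx"
    unfolding L_def likelihood_consistent_def ..
  have P_eq: "P = prior_consistent MX MZ p pdata qzx"
    unfolding P_def prior_consistent_def ..
  have Q_eq: "Q = posterior_consistent MX MZ p qzx"
    unfolding Q_def posterior_consistent_def ..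
  have px_nz: "\<forall>x\<in>space MX. marg_x MZ p x \<noteq> 0" using px_pos by force
  have pz_nz: "\<forall>z\<in>space MZ. marg_z MX p z \<noteq> 0" using pz_pos by force
  have qz_nz: "\<forall>z\<in>space MZ. q_prior MX pdata qzx z \<noteq> 0" using qz_pos by force
  have pdata_nz: "\<forall>x\<in>space MX. pdata x \<noteq> 0" using pdata_pos by force
  have q_nz: "\<forall>x\<in>space MX. \<forall>z\<in>space MZ. qzx x z \<noteq> 0" using q_pos by force
  have pX_one: "(\<integral>x. marg_x MZ p x \<partial>MX) = 1"
    using integral_marg_x[OF sfX sfZ p_int] p_one by simp
  have pX_meas: "marg_x MZ p \<in> borel_measurable MX"
    using sfZ p_meas by (rule borel_measurable_marg_x)
  show ?thesis
    unfolding L_eq P_eq Q_eq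
    using likelihood_prior_consistent_imp_posterior[OF _ _ pz_nz pdata_nz q_one]
      likelihood_posterior_consistent_imp_prior[OF _ _ pX_one pdata_one px_nz pz_nz qz_nz q_nz]
      posterior_prior_consistent_complete_imp_marg_x_AE[OF _ _ _ pX_meas pdata_meas
        px_nz pdata_nz qz_nz]
      posterior_prior_consistent_imp_likelihood_AE[OF _ _ _ px_nz]
    by blast
qed

end
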